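(* Let $\mathcal F=(F,\rightarrowtail)$ be a finite argumentation framework. If $A\subseteq F$ is weakly admissible, then $A$ is contained in some weakly complete extension of $\mathcal F$.
   Context: An argumentation framework $\mathcal F=(F,\rightarrowtail)$ consists of a finite set $F$ of arguments and an attack relation $\rightarrowtail\subseteq F\times F$. An argument $y$ attacks a set $A$ if $y\rightarrowtail a$ for some $a\in A$; $A^+=\{x\in F:\exists a\in A,\ a\rightarrowtail x\}$. A set is conflict-free if none of its elements attacks one of its elements. For $A\subseteq F$, the $A$-reduct $\mathcal F^A$ is the restriction of $\mathcal F$ to $F\setminus(A\cup A^+)$. Weak admissibility (defined recursively on the size of the framework): $A\subseteq F$ is weakly admissible in $\mathcal F$ if $A$ is conflict-free and for every $y\in F$ attacking $A$, $y$ belongs to no weakly admissible set of $\mathcal F^A$. A weakly complete labeling is a map $L:F\to\{\mathtt{in},\mathtt{out},\mathtt{undec}\}$ such that for every $a\in F$: if $L(a)=\mathtt{in}$ then no attacker of $a$ is labeled $\mathtt{in}$; if $L(a)=\mathtt{out}$ then some attacker of $a$ is labeled $\mathtt{in}$; if $L(a)=\mathtt{undec}$ then some attacker of $a$ is labeled $\mathtt{undec}$ and no attacker of $a$ is labeled $\mathtt{in}$. A set is a weakly complete extension if it equals $\{a:L(a)=\mathtt{in}\}$ for some weakly complete labeling $L$. *)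

theory Defs
  imports Main
begin

text \<open>An argumentation framework is given by a carrier set F of arguments and an
attack relation att (a binary predicate); only attacks between elements of F matter.\<close>

definition conflict_free :: "('a \<Rightarrow> 'a \<Rightarrow> bool) \<Rightarrow> 'a set \<Rightarrow> bool" where
  "conflict_free att A \<longleftrightarrow> (\<forall>a\<in>A. \<forall>b\<in>A. \<not> att a b)"

definition attacks_set :: "('a \<Rightarrow> 'a \<Rightarrow> bool) \<Rightarrow> 'a \<Rightarrow> 'a set \<Rightarrow> bool" where
  "attacks_set att y A \<longleftrightarrow> (\<exists>a\<in>A. att y a)"

definition plus_set :: "'a set \<Rightarrow> ('a \<Rightarrow> 'a \<Rightarrow> bool) \<Rightarrow> 'a set \<Rightarrow> 'a set" where
  "plus_set F att A = {x \<in> F. \<exists>a\<in>A. att a x}"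

text \<open>Carrier of the A-reduct; the attack relation of the reduct is the restriction of att,
which (since all quantifications range over the carrier) is represented by att itself.\<close>
definition reduct :: "'a set \<Rightarrow> ('a \<Rightarrow> 'a \<Rightarrow> bool) \<Rightarrow> 'a set \<Rightarrow> 'a set" where
  "reduct F att A = F - (A \<union> plus_set F att A)"

function weakly_admissible :: "'a set \<Rightarrow> ('a \<Rightarrow> 'a \<Rightarrow> bool) \<Rightarrow> 'a set \<Rightarrow> bool" where
  "weakly_admissible F att A =
     (if finite F \<and> A \<subseteq> F \<and> conflict_free att A then
        (\<forall>y\<in>F. attacks_set att y A \<longrightarrow>
           \<not> (\<exists>B. weakly_admissible (reduct F att A) att B \<and> y \<in> B))
      else False)"
  by pat_completeness auto

lemma reduct_psubset:
  assumes "A \<subseteq> F" "A \<noteq> {}"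
  shows "reduct F att A \<subset> F"
  using assms unfolding reduct_def by blast

termination
  by (relation "measure (\<lambda>(F, att, A). card F)")
     (auto intro!: psubset_card_mono reduct_psubset simp: attacks_set_def)

datatype label = In | Out | Undec

definition weakly_complete_labeling ::
  "'a set \<Rightarrow> ('a \<Rightarrow> 'a \<Rightarrow> bool) \<Rightarrow> ('a \<Rightarrow> label) \<Rightarrow> bool" where
  "weakly_complete_labeling F att L \<longleftrightarrow>
     (\<forall>a\<in>F.
        (L a = In \<longrightarrow> (\<forall>b\<in>F. att b a \<longrightarrow> L b \<noteq> In)) \<and>
        (L a = Out \<longrightarrow> (\<exists>b\<in>F. att b a \<and> L b = In)) \<and>
        (L a = Undec \<longrightarrow> (\<exists>b\<in>F. att b a \<and> L b = Undec) \<and> (\<forall>b\<in>F. att b a \<longrightarrow> L b \<noteq> In)))"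

definition weakly_complete_extension :: "'a set \<Rightarrow> ('a \<Rightarrow> 'a \<Rightarrow> bool) \<Rightarrow> 'a set \<Rightarrow> bool" where
  "weakly_complete_extension F att E \<longleftrightarrow>
     (\<exists>L. weakly_complete_labeling F att L \<and> E = {a \<in> F. L a = In})"

end

theory Submission
  imports Defs
begin

text \<open>Label A in, the arguments attacked by A out, and the A-reduct by a weakly complete
labeling of the reduct. This is weakly complete provided no argument labeled in by the reduct
labeling attacks A, which holds if every such argument lies in a weakly admissible set of the
reduct, since A is weakly admissible. Labelings of this kind exist in every finite framework, by
induction on its size: if some argument u is unattacked, extend a labeling of the {u}-reduct in
the same way (u together with a weakly admissible set of the reduct is weakly admissible);
otherwise every argument has an attacker and labeling everything undec is weakly complete.\<close>

declare weakly_admissible.simps[simp del]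

lemma weakly_admissible_iff:
  assumes "finite F"
  shows "weakly_admissible F att A \<longleftrightarrow>
    A \<subseteq> F \<and> conflict_free att A \<and>
    (\<forall>y\<in>F. attacks_set att y A \<longrightarrow> (\<forall>B. weakly_admissible (reduct F att A) att B \<longrightarrow> y \<notin> B))"
  using assms weakly_admissible.simps[of F att A] by auto

lemma weakly_admissibleD:
  assumes "weakly_admissible F att A"
  shows "finite F" "A \<subseteq> F" "conflict_free att A"
  using assms weakly_admissible.simps[of F att A] by (auto split: if_splits)

lemma weakly_admissible_attacker_notin:
  assumes "weakly_admissible F att A" "y \<in> F" "attacks_set att y A"
    and "weakly_admissible (reduct F att A) att B"
  shows "y \<notin> B"
  using assms weakly_admissible_iff[OF weakly_admissibleD(1)[OF assms(1)]] by blast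

lemma weakly_admissible_empty: "finite F \<Longrightarrow> weakly_admissible F att {}"
  by (simp add: weakly_admissible_iff conflict_free_def attacks_set_def)

lemma reduct_subset: "reduct F att A \<subseteq> F"
  unfolding reduct_def by blast

lemma reduct_reduct: "reduct (reduct F att A) att B = reduct F att (A \<union> B)"
  unfolding reduct_def plus_set_def by auto

lemma weakly_admissible_insert_unattacked:
  assumes "finite F" "u \<in> F" "\<forall>b\<in>F. \<not> att b u"
    and B: "weakly_admissible (reduct F att {u}) att B"
  shows "weakly_admissible F att (insert u B)"
proof -
  have "B \<subseteq> reduct F att {u}" and "conflict_free att B"
    using weakly_admissibleD[OF B] by auto
  then have "insert u B \<subseteq> F" "conflict_free att (insert u B)"
    using assms(2,3) reduct_subset[of F att "{u}"]
    by (auto simp: conflict_free_def reduct_def plus_set_def)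
  moreover have "y \<notin> C"
    if "y \<in> F" "attacks_set att y (insert u B)"
      and C: "weakly_admissible (reduct F att (insert u B)) att C" for y C
  proof
    assume "y \<in> C"
    have C': "weakly_admissible (reduct (reduct F att {u}) att B) att C"
      using C by (simp add: reduct_reduct)
    with \<open>y \<in> C\<close> have "y \<in> reduct F att {u}"
      using weakly_admissibleD(2)[OF C'] reduct_subset[of "reduct F att {u}" att B] by blast
    moreover have "attacks_set att y B"
      using that(1,2) assms(3) by (auto simp: attacks_set_def)
    ultimately show False
      using weakly_admissible_attacker_notin[OF B _ _ C'] \<open>y \<in> C\<close> by blast
  qed
  ultimately show ?thesis
    using assms(1) by (simp add: weakly_admissible_iff)
qed

definition extend_labeling ::
  "'a set \<Rightarrow> ('a \<Rightarrow> 'a \<Rightarrow> bool) \<Rightarrow> 'a set \<Rightarrow> ('a \<Rightarrow> label) \<Rightarrow> 'a \<Rightarrow> label" where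
  "extend_labeling F att A L x =
     (if x \<in> A then In else if x \<in> plus_set F att A then Out else L x)"

lemma weakly_complete_labeling_extend:
  assumes "A \<subseteq> F" "conflict_free att A"
    and L: "weakly_complete_labeling (reduct F att A) att L"
    and In_not_attacking: "\<forall>b\<in>reduct F att A. L b = In \<longrightarrow> \<not> attacks_set att b A"
  shows "weakly_complete_labeling F att (extend_labeling F att A L)"
proof -
  let ?R = "reduct F att A" and ?L = "extend_labeling F att A L"
  have L_reduct: "?L b = L b" if "b \<in> ?R" for b
    using that by (simp add: extend_labeling_def reduct_def)
  have reduct_attacker: "b \<in> ?R"
    if "a \<in> ?R" "b \<in> F" "att b a" "?L b \<noteq> Out" for a b
    using that by (auto simp: extend_labeling_def reduct_def plus_set_def split: if_splits)
  have A_unattacked_by_In: "?L b \<noteq> In" if "a \<in> A" "b \<in> F" "att b a" for a b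
  proof
    assume "?L b = In"
    have "b \<notin> A" using that assms(2) by (auto simp: conflict_free_def)
    with \<open>?L b = In\<close> have "b \<in> ?R"
      using that(2) by (auto simp: extend_labeling_def reduct_def split: if_splits)
    then show False
      using In_not_attacking \<open>?L b = In\<close> L_reduct that by (auto simp: attacks_set_def)
  qed
  show ?thesis
    unfolding weakly_complete_labeling_def
  proof
    fix a assume "a \<in> F"
    then consider "a \<in> A" | "a \<notin> A" "a \<in> plus_set F att A" | "a \<in> ?R"
      by (auto simp: reduct_def)
    then show "(?L a = In \<longrightarrow> (\<forall>b\<in>F. att b a \<longrightarrow> ?L b \<noteq> In)) \<and>
        (?L a = Out \<longrightarrow> (\<exists>b\<in>F. att b a \<and> ?L b = In)) \<and>
        (?L a = Undec \<longrightarrow> (\<exists>b\<in>F. att b a \<and> ?L b = Undec) \<and> (\<forall>b\<in>F. att b a \<longrightarrow> ?L b \<noteq> In))"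
    proof cases
      case 1
      then show ?thesis using A_unattacked_by_In by (simp add: extend_labeling_def)
    next
      case 2
      then show ?thesis
        using assms(1) by (auto simp: extend_labeling_def plus_set_def)
    next
      case 3
      have L_at_a: "(L a = In \<longrightarrow> (\<forall>b\<in>?R. att b a \<longrightarrow> L b \<noteq> In)) \<and>
          (L a = Out \<longrightarrow> (\<exists>b\<in>?R. att b a \<and> L b = In)) \<and>
          (L a = Undec \<longrightarrow> (\<exists>b\<in>?R. att b a \<and> L b = Undec) \<and> (\<forall>b\<in>?R. att b a \<longrightarrow> L b \<noteq> In))"
        using L 3 unfolding weakly_complete_labeling_def by blast
      have no_In_attacker: "\<forall>b\<in>F. att b a \<longrightarrow> ?L b \<noteq> In" if "L a \<noteq> Out"
      proof (intro ballI impI notI)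
        fix b assume "b \<in> F" "att b a" "?L b = In"
        then have "b \<in> ?R"
          using reduct_attacker[OF 3] by simp
        with \<open>?L b = In\<close> have "L b = In"
          using L_reduct by simp
        with \<open>b \<in> ?R\<close> \<open>att b a\<close> show False
          using L_at_a that by (cases "L a") auto
      qed
      have attacker_from_reduct: "\<exists>b\<in>F. att b a \<and> ?L b = l"
        if "\<exists>b\<in>?R. att b a \<and> L b = l" for l
        using that L_reduct reduct_subset[of F att A] by fastforce
      have "?L a = L a" using L_reduct 3 .
      then show ?thesis
        using L_at_a no_In_attacker attacker_from_reduct[of In] attacker_from_reduct[of Undec]
        by (cases "L a") auto
    qed
  qed
qed

lemma ex_weakly_complete_labeling_In_weakly_admissible:
  assumes "finite F"
  shows "\<exists>L. weakly_complete_labeling F att L \<and>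
    (\<forall>b\<in>F. L b = In \<longrightarrow> (\<exists>B. weakly_admissible F att B \<and> b \<in> B))"
  using assms
proof (induction "card F" arbitrary: F rule: less_induct)
  case less
  show ?case
  proof (cases "\<exists>u\<in>F. \<forall>b\<in>F. \<not> att b u")
    case False
    then have "weakly_complete_labeling F att (\<lambda>_. Undec)"
      by (auto simp: weakly_complete_labeling_def)
    then show ?thesis by auto
  next
    case True
    then obtain u where u: "u \<in> F" "\<forall>b\<in>F. \<not> att b u" by blast
    let ?R = "reduct F att {u}"
    have "finite ?R" "card ?R < card F"
      using less.prems u reduct_psubset[of "{u}" F att]
      by (auto intro: psubset_card_mono finite_subset[OF reduct_subset])
    then obtain L where L: "weakly_complete_labeling ?R att L"
      and L_In: "\<forall>b\<in>?R. L b = In \<longrightarrow> (\<exists>B. weakly_admissible ?R att B \<and> b \<in> B)"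
      using less.hyps by blast
    have "weakly_complete_labeling F att (extend_labeling F att {u} L)"
      using weakly_complete_labeling_extend[OF _ _ L] u reduct_subset[of F att "{u}"]
      by (auto simp: conflict_free_def attacks_set_def)
    moreover have "\<exists>B. weakly_admissible F att B \<and> b \<in> B"
      if "b \<in> F" "extend_labeling F att {u} L b = In" for b
    proof -
      from that have "b = u \<or> (b \<in> ?R \<and> L b = In)"
        by (auto simp: extend_labeling_def reduct_def split: if_splits)
      then obtain B where "weakly_admissible ?R att B" "b \<in> insert u B"
        using L_In weakly_admissible_empty[OF \<open>finite ?R\<close>] by blast
      then show ?thesis
        using weakly_admissible_insert_unattacked[of F u att, OF less.prems u] by blast
    qed
    ultimately show ?thesis by blast
  qed
qed

theorem mainTheorem16:
  fixes F :: "'a set" and att :: "'a \<Rightarrow> 'a \<Rightarrow> bool" and A :: "'a set"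
  assumes "finite F"
    and "weakly_admissible F att A"
  shows "\<exists>E. weakly_complete_extension F att E \<and> A \<subseteq> E"
proof -
  let ?R = "reduct F att A"
  have "A \<subseteq> F" "conflict_free att A"
    using weakly_admissibleD[OF assms(2)] by auto
  obtain L where L: "weakly_complete_labeling ?R att L"
    and L_In: "\<forall>b\<in>?R. L b = In \<longrightarrow> (\<exists>B. weakly_admissible ?R att B \<and> b \<in> B)"
    using ex_weakly_complete_labeling_In_weakly_admissible[OF finite_subset[OF reduct_subset assms(1)]]
    by blast
  have "\<forall>b\<in>?R. L b = In \<longrightarrow> \<not> attacks_set att b A"
    using L_In weakly_admissible_attacker_notin[OF assms(2)] reduct_subset[of F att A] by blast
  then have "weakly_complete_labeling F att (extend_labeling F att A L)"
    using weakly_complete_labeling_extend[OF \<open>A \<subseteq> F\<close> \<open>conflict_free att A\<close> L] by blast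
  moreover have "A \<subseteq> {a \<in> F. extend_labeling F att A L a = In}"
    using \<open>A \<subseteq> F\<close> by (auto simp: extend_labeling_def)
  ultimately show ?thesis
    unfolding weakly_complete_extension_def by blast
qed

end
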